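(* Let $n\ge 2$, $c\in\mathbb R$, $d>0$, $\overline K>K>0$, $\eta:=(\overline K-K)/4$, $v\in C^1(\mathbb R^n)$, and $\Gamma\subseteq{\rm C}(d,K)$. Let $Z_\star:=\{x'\in\overline{B^{n-1}_d}: {\rm r}(x')\cap\{v=c\}\ne\varnothing\}$. Suppose that $\{v=c\}\cap{\rm C}(d,\overline K)\ne\varnothing$, that $\{v=c\}\cap{\rm C}(d,\overline K)\subseteq\Gamma_\eta:=\bigcup_{p\in\Gamma}B_\eta(p)$, and that $\partial_n v(x)>0$ for all $x\in\mathbb R^n$. Then $Z_\star=\overline{B^{n-1}_d}$.
   Context: Points of $\mathbb R^n$ are written $x=(x',x_n)\in\mathbb R^{n-1}\times\mathbb R$, and $\partial_n=\partial/\partial x_n$. For $d,h>0$, ${\rm C}(d,h):=\{x\in\mathbb R^n: |x'|<d,\ |x_n|<h\}$. $B^{n-1}_d$ is the open ball of radius $d$ centered at $0$ in $\mathbb R^{n-1}$; $B_\eta(p)$ is the open ball in $\mathbb R^n$. For $x'\in\mathbb R^{n-1}$, ${\rm r}(x'):=\{(x',t): t\in\mathbb R\}$. *)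

theory Defs
  imports "HOL-Analysis.Analysis"
begin

text \<open>Points of R^n are modelled as pairs (x', x_n) :: (real^'m) \<times> real, with n - 1 = CARD('m) \<ge> 1.
  The product norm is Euclidean, so balls are the Euclidean balls of R^n.\<close>

definition cyl :: "real \<Rightarrow> real \<Rightarrow> ((real^'m) \<times> real) set" where
  "cyl d h = {x. norm (fst x) < d \<and> \<bar>snd x\<bar> < h}"

definition vline :: "real^'m \<Rightarrow> ((real^'m) \<times> real) set" where
  "vline x' = {(x', t) | t. True}"

end

theory Submission
  imports Defs
begin

text \<open>Call \<open>(x', t)\<close> with \<open>v(x', t) = c\<close> a crossing over \<open>x'\<close>. The covering hypothesis
  forces every crossing inside \<open>C(d, Kbar)\<close> to lie below height \<open>K + \<eta> < Kbar\<close>. Let \<open>A\<close> be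
  the set of \<open>x'\<close> in the open ball with a crossing of height at most \<open>K + \<eta>\<close>. It is relatively
  closed, being cut out by the projection of a compact set. It is open: as \<open>\<partial>\<^sub>n v > 0\<close>, a crossing
  at height \<open>t\<close> is bracketed by \<open>v < c\<close> at \<open>t - e\<close> and \<open>v > c\<close> at \<open>t + e\<close>, so by continuity and
  the intermediate value theorem nearby lines cross within \<open>[t - e, t + e]\<close>; for small \<open>e\<close> this
  lies inside \<open>C(d, Kbar)\<close>, hence below \<open>K + \<eta>\<close>. Being nonempty, \<open>A\<close> is the whole ball by
  connectedness, and the closed projection then contains the closed ball.\<close>

lemma strict_mono_vertical:
  fixes v :: "'a::real_normed_vector \<times> real \<Rightarrow> real"
  assumes deriv: "\<And>x. (v has_derivative v' x) (at x)"
    and pos: "\<And>x. v' x (0, 1) > 0"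
    and "a < b"
  shows "v (y, a) < v (y, b)"
proof (rule DERIV_pos_imp_increasing[OF \<open>a < b\<close>])
  fix t :: real
  have "((\<lambda>t. (y, t)) has_derivative (\<lambda>h. (0, h))) (at t)"
    by (auto intro!: derivative_eq_intros)
  from has_derivative_compose[OF this deriv]
  have "((\<lambda>t. v (y, t)) has_derivative (\<lambda>h. v' (y, t) (0, h))) (at t)"
    by simp
  moreover have "(\<lambda>h. v' (y, t) (0, h)) = (*) (v' (y, t) (0, 1))"
  proof
    fix h :: real
    show "v' (y, t) (0, h) = v' (y, t) (0, 1) * h"
      using linear_scale[OF has_derivative_linear[OF deriv], of "(y, t)" h "(0, 1)"] by simp
  qed
  ultimately have "((\<lambda>t. v (y, t)) has_real_derivative v' (y, t) (0, 1)) (at t)"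
    by (simp add: has_field_derivative_def)
  then show "\<exists>z. ((\<lambda>t. v (y, t)) has_real_derivative z) (at t) \<and> z > 0"
    using pos by blast
qed

lemma level_crossing_persists:
  fixes v :: "'a::topological_space \<times> real \<Rightarrow> real"
  assumes cont: "continuous_on UNIV v"
    and "v (y, a) < c" and "c < v (y, b)" and "a \<le> b"
  obtains U where "open U" "y \<in> U" "\<And>z. z \<in> U \<Longrightarrow> \<exists>s\<in>{a..b}. v (z, s) = c"
proof
  have slice: "continuous_on S (\<lambda>z. v (z, s))" "continuous_on T (\<lambda>s. v (z, s))" for S T s z
    by (auto intro!: continuous_on_compose2[OF cont] continuous_intros)
  show "open ({z. v (z, a) < c} \<inter> {z. c < v (z, b)})"
    by (intro open_Int open_Collect_less slice continuous_on_const)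
  show "y \<in> {z. v (z, a) < c} \<inter> {z. c < v (z, b)}"
    using assms by simp
  fix z assume "z \<in> {z. v (z, a) < c} \<inter> {z. c < v (z, b)}"
  then show "\<exists>s\<in>{a..b}. v (z, s) = c"
    using IVT'[of "\<lambda>s. v (z, s)" a c b] slice \<open>a \<le> b\<close> by fastforce
qed

lemma compact_projection_level_slab:
  fixes v :: "'a::heine_borel \<times> real \<Rightarrow> real"
  assumes "continuous_on UNIV v" and "compact C"
  shows "compact (fst ` ({x. v x = c} \<inter> (C \<times> {a..b})))"
proof -
  have "closed {x. v x = c}"
    using continuous_closed_preimage_constant[OF assms(1) closed_UNIV] by simp
  then show ?thesis
    by (intro compact_continuous_image continuous_intros closed_Int_compact
        compact_Times assms(2) compact_Icc)
qed

lemma cball_subset_projection_level_set: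
  fixes v :: "'a::euclidean_space \<times> real \<Rightarrow> real"
  assumes cont: "continuous_on UNIV v"
    and mono: "\<And>y a b. a < b \<Longrightarrow> v (y, a) < v (y, b)"
    and "d > 0" and "L < H"
    and gap: "\<And>z s. z \<in> ball 0 d \<Longrightarrow> \<bar>s\<bar> < H \<Longrightarrow> v (z, s) = c \<Longrightarrow> \<bar>s\<bar> \<le> L"
    and "z\<^sub>0 \<in> ball 0 d" and "\<bar>s\<^sub>0\<bar> < H" and "v (z\<^sub>0, s\<^sub>0) = c"
  shows "cball 0 d \<subseteq> fst ` {x. v x = c}"
proof -
  define B where "B = fst ` ({x. v x = c} \<inter> (cball 0 d \<times> {-L..L}))"
  define A where "A = ball 0 d \<inter> B"
  have "closed B"
    unfolding B_def by (intro compact_imp_closed compact_projection_level_slab cont compact_cball)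
  have in_A: "z \<in> A" if "z \<in> ball 0 d" "\<bar>s\<bar> < H" "v (z, s) = c" for z s
    using that gap[OF that] unfolding A_def B_def by (intro IntI image_eqI[of z fst "(z, s)"]) auto
  have "open A"
  proof (subst open_subopen, intro ballI)
    fix y assume "y \<in> A"
    then obtain t where t: "y \<in> ball 0 d" "v (y, t) = c" "\<bar>t\<bar> \<le> L"
      unfolding A_def B_def by auto
    define e where "e = (H - L) / 2"
    have "e > 0"
      using \<open>L < H\<close> by (simp add: e_def)
    then have "v (y, t - e) < c" "c < v (y, t + e)" "t - e \<le> t + e"
      using mono[of "t - e" t y] mono[of t "t + e" y] t(2) by simp_all
    then obtain U where U: "open U" "y \<in> U" "\<And>z. z \<in> U \<Longrightarrow> \<exists>s\<in>{t-e..t+e}. v (z, s) = c"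
      by (rule level_crossing_persists[OF cont]) blast
    have "ball 0 d \<inter> U \<subseteq> A"
    proof
      fix z assume z: "z \<in> ball 0 d \<inter> U"
      then obtain s where s: "s \<in> {t-e..t+e}" "v (z, s) = c"
        using U(3) by blast
      have "\<bar>s\<bar> < H"
        using s(1) t(3) \<open>L < H\<close> by (auto simp: e_def abs_less_iff abs_le_iff field_simps)
      then show "z \<in> A"
        using in_A z s(2) by blast
    qed
    moreover have "open (ball 0 d \<inter> U)" "y \<in> ball 0 d \<inter> U"
      using U(1,2) t(1) by auto
    ultimately show "\<exists>T. open T \<and> y \<in> T \<and> T \<subseteq> A"
      by blast
  qed
  then have "openin (top_of_set (ball 0 d)) A"
    by (intro open_subset) (simp add: A_def)
  moreover have "closedin (top_of_set (ball 0 d)) A"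
    unfolding A_def using \<open>closed B\<close> by (rule closedin_closed_Int)
  moreover have "A \<noteq> {}"
    using in_A[OF assms(6-8)] by blast
  ultimately have "A = ball 0 d"
    using connected_ball[of 0 d] unfolding connected_clopen by blast
  then have "closure (ball 0 d) \<subseteq> B"
    using closure_minimal[OF _ \<open>closed B\<close>] unfolding A_def by blast
  then show ?thesis
    using \<open>d > 0\<close> unfolding B_def by auto
qed

lemma abs_snd_less_of_mem_thickening:
  assumes "\<Gamma> \<subseteq> cyl d K" and "x \<in> (\<Union>p\<in>\<Gamma>. ball p \<eta>)"
  shows "\<bar>snd x\<bar> < K + \<eta>"
proof -
  obtain p where "p \<in> \<Gamma>" "dist p x < \<eta>"
    using assms(2) by auto
  moreover from this have "\<bar>snd p\<bar> < K"
    using assms(1) by (auto simp: cyl_def)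
  ultimately show ?thesis
    using dist_snd_le[of p x] by (simp add: dist_real_def)
qed

lemma vline_inter_nonempty_iff: "vline x' \<inter> S \<noteq> {} \<longleftrightarrow> x' \<in> fst ` S"
  unfolding vline_def by force

theorem corollary2p2:
  fixes v :: "(real^'m) \<times> real \<Rightarrow> real"
    and v' :: "(real^'m) \<times> real \<Rightarrow> ((real^'m) \<times> real) \<Rightarrow>\<^sub>L real"
    and \<Gamma> :: "((real^'m) \<times> real) set"
    and c d K Kbar \<eta> :: real
  assumes "d > 0" and "K > 0" and "Kbar > K"
    and "\<eta> = (Kbar - K) / 4"
    and deriv: "\<And>x. (v has_derivative blinfun_apply (v' x)) (at x)"
    and C1: "continuous_on UNIV v'"
    and "\<Gamma> \<subseteq> cyl d K"
    and "{x. v x = c} \<inter> cyl d Kbar \<noteq> {}"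
    and "{x. v x = c} \<inter> cyl d Kbar \<subseteq> (\<Union>p\<in>\<Gamma>. ball p \<eta>)"
    and pos: "\<And>x. v' x (0, 1) > 0"
  shows "{x'. x' \<in> cball 0 d \<and> vline x' \<inter> {x. v x = c} \<noteq> {}} = cball 0 d"
proof -
  have cont: "continuous_on UNIV v"
    by (intro continuous_at_imp_continuous_on ballI has_derivative_continuous[OF deriv])
  have gap: "\<bar>s\<bar> \<le> K + \<eta>" if "z \<in> ball 0 d" "\<bar>s\<bar> < Kbar" "v (z, s) = c" for z s
  proof -
    have "(z, s) \<in> {x. v x = c} \<inter> cyl d Kbar"
      using that by (simp add: cyl_def)
    then have "\<bar>snd (z, s)\<bar> < K + \<eta>"
      by (intro abs_snd_less_of_mem_thickening[OF assms(7)] subsetD[OF assms(9)])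
    then show ?thesis
      by simp
  qed
  obtain x\<^sub>0 where "v x\<^sub>0 = c" "x\<^sub>0 \<in> cyl d Kbar"
    using assms(8) by blast
  then have "fst x\<^sub>0 \<in> ball 0 d" "\<bar>snd x\<^sub>0\<bar> < Kbar" "v (fst x\<^sub>0, snd x\<^sub>0) = c"
    by (auto simp: cyl_def)
  moreover have "K + \<eta> < Kbar"
    using assms(3,4) by simp
  ultimately have "cball 0 d \<subseteq> fst ` {x. v x = c}"
    by (intro cball_subset_projection_level_set[OF cont strict_mono_vertical[OF deriv pos]
          \<open>d > 0\<close> _ gap])
  then show ?thesis
    by (auto simp: vline_inter_nonempty_iff)
qed

end
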